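(* Let $(X,d)$ be a metric space (not necessarily complete) with $|X|\geqslant 3$, and let $T\colon X\to X$ be continuous. Suppose: (i) $T$ has no periodic points of prime period $2$, i.e. $T(T(x))\neq x$ for every $x\in X$ with $Tx\neq x$; (ii) there is an everywhere dense subset $M\subseteq X$ and constants $\alpha,\lambda\geqslant 0$ with $2\alpha+\frac{3\lambda}{2}<1$ such that $$d(Tx,Ty)+d(Ty,Tz)+d(Tx,Tz)\leqslant \alpha\big(d(x,y)+d(y,z)+d(z,x)\big)+\lambda\big(d(x,Tx)+d(y,Ty)+d(z,Tz)\big)$$ for all pairwise distinct $x,y,z\in M$; (iii) there exists $x_0\in X$ such that the sequence of iterates $x_n=Tx_{n-1}$, $n=1,2,\dots$, has a subsequence $(x_{n_k})$ converging to a point $x^*\in X$. Then $x^*$ is a fixed point of $T$, and $T$ has at most two fixed points. *)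

theory Defs
  imports "HOL-Analysis.Analysis"
begin

end

theory Submission
  imports Defs
begin

text \<open>By density and continuity the perimeter inequality holds for all triples of pairwise
  distinct points. If the orbit \<open>x_n\<close> never hits a fixed point, the absence of 2-cycles makes
  \<open>x_n, x_{n+1}, x_{n+2}\<close> pairwise distinct. The inequality for this triangle, combined with
  \<open>d(x_{n+2}, x_{n+3}) \<le> d(x_{n+1}, x_{n+2}) + d(x_{n+1}, x_{n+3})\<close>, shows that the perimeters
  of consecutive orbit triangles shrink by the factor \<open>(\<alpha> + \<lambda>) / (1 - \<lambda>/2) < 1\<close>. Hence
  \<open>d(x_n, x_{n+1}) \<rightarrow> 0\<close>, and by continuity every subsequential limit is fixed. Three distinct
  fixed points would form a triangle whose perimeter is at most \<open>\<alpha> < 1\<close> times itself.\<close>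

definition perimeter :: "'a::metric_space \<Rightarrow> 'a \<Rightarrow> 'a \<Rightarrow> real" where
  "perimeter x y z = dist x y + dist y z + dist x z"

definition contracts_perimeters_on :: "'a::metric_space set \<Rightarrow> ('a \<Rightarrow> 'a) \<Rightarrow> real \<Rightarrow> real \<Rightarrow> bool"
  where "contracts_perimeters_on S T alpha lam \<longleftrightarrow>
    (\<forall>x\<in>S. \<forall>y\<in>S. \<forall>z\<in>S. x \<noteq> y \<and> y \<noteq> z \<and> x \<noteq> z \<longrightarrow>
      perimeter (T x) (T y) (T z)
        \<le> alpha * perimeter x y z + lam * (dist x (T x) + dist y (T y) + dist z (T z)))"

lemma contracts_perimeters_onD:
  assumes "contracts_perimeters_on S T alpha lam" "x \<in> S" "y \<in> S" "z \<in> S" "x \<noteq> y" "y \<noteq> z" "x \<noteq> z"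
  shows "perimeter (T x) (T y) (T z)
    \<le> alpha * perimeter x y z + lam * (dist x (T x) + dist y (T y) + dist z (T z))"
  using assms unfolding contracts_perimeters_on_def by blast

lemma contracts_perimeters_on_closure:
  fixes T :: "'a::metric_space \<Rightarrow> 'a"
  assumes cont: "continuous_on (closure S) T" and contr: "contracts_perimeters_on S T alpha lam"
  shows "contracts_perimeters_on (closure S) T alpha lam"
  unfolding contracts_perimeters_on_def
proof (intro ballI impI, elim conjE)
  fix x y z assume x: "x \<in> closure S" and y: "y \<in> closure S" and z: "z \<in> closure S"
    and "x \<noteq> y" "y \<noteq> z" "x \<noteq> z"
  obtain a where a: "\<And>n. a n \<in> S" "a \<longlonglongrightarrow> x" using x closure_sequential by blast
  obtain b where b: "\<And>n. b n \<in> S" "b \<longlonglongrightarrow> y" using y closure_sequential by blast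
  obtain c where c: "\<And>n. c n \<in> S" "c \<longlonglongrightarrow> z" using z closure_sequential by blast
  have T_tendsto: "(\<lambda>n. T (u n)) \<longlonglongrightarrow> T w" if "\<And>n. u n \<in> S" "u \<longlonglongrightarrow> w" "w \<in> closure S" for u w
    using cont that closure_subset unfolding continuous_on_sequentially comp_def by blast
  note limits = a(2) b(2) c(2) T_tendsto[OF a x] T_tendsto[OF b y] T_tendsto[OF c z]
  have eventually_ne: "\<forall>\<^sub>F n in sequentially. u n \<noteq> v n" if "u \<longlonglongrightarrow> p" "v \<longlonglongrightarrow> q" "p \<noteq> q"
    for u v :: "nat \<Rightarrow> 'a" and p q
    using order_tendstoD(1)[OF tendsto_dist[OF that(1,2)], of 0] that(3)
    by (auto elim: eventually_mono)
  have "\<forall>\<^sub>F n in sequentially. a n \<noteq> b n \<and> b n \<noteq> c n \<and> a n \<noteq> c n"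
    using \<open>x \<noteq> y\<close> \<open>y \<noteq> z\<close> \<open>x \<noteq> z\<close>
    by (intro eventually_conj eventually_ne[OF a(2) b(2)] eventually_ne[OF b(2) c(2)]
        eventually_ne[OF a(2) c(2)])
  then have ev: "\<forall>\<^sub>F n in sequentially. perimeter (T (a n)) (T (b n)) (T (c n))
      \<le> alpha * perimeter (a n) (b n) (c n)
        + lam * (dist (a n) (T (a n)) + dist (b n) (T (b n)) + dist (c n) (T (c n)))"
    by eventually_elim (use contracts_perimeters_onD[OF contr a(1) b(1) c(1)] in blast)
  show "perimeter (T x) (T y) (T z)
      \<le> alpha * perimeter x y z + lam * (dist x (T x) + dist y (T y) + dist z (T z))"
    unfolding perimeter_def
    by (rule tendsto_le[OF sequentially_bot _ _ ev[unfolded perimeter_def]];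
        intro tendsto_intros limits)
qed

lemma finite_card_le_2I:
  assumes "\<And>a b c. \<lbrakk>a \<in> A; b \<in> A; c \<in> A; a \<noteq> b; b \<noteq> c\<rbrakk> \<Longrightarrow> a = c"
  shows "finite A \<and> card A \<le> 2"
proof (rule ccontr)
  assume "\<not> (finite A \<and> card A \<le> 2)"
  then obtain B where "B \<subseteq> A" "card B = 3"
    by (metis infinite_arbitrarily_large not_less_eq_eq numeral_3_eq_3 numeral_2_eq_2
        obtain_subset_with_card_n)
  then obtain a b c where "{a, b, c} \<subseteq> A" "a \<noteq> b" "b \<noteq> c" "a \<noteq> c"
    by (auto simp: card_3_iff)
  then show False using assms by blast
qed

lemma contracts_perimeters_card_fixed_points:
  assumes contr: "contracts_perimeters_on S T alpha lam" and "alpha < 1"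
  shows "finite {x \<in> S. T x = x} \<and> card {x \<in> S. T x = x} \<le> 2"
proof (rule finite_card_le_2I)
  fix a b c assume abc: "a \<in> {x \<in> S. T x = x}" "b \<in> {x \<in> S. T x = x}" "c \<in> {x \<in> S. T x = x}"
    and "a \<noteq> b" "b \<noteq> c"
  show "a = c"
  proof (rule ccontr)
    assume "a \<noteq> c"
    with abc \<open>a \<noteq> b\<close> \<open>b \<noteq> c\<close> have "perimeter a b c \<le> alpha * perimeter a b c"
      using contracts_perimeters_onD[OF contr, of a b c] by simp
    moreover have "perimeter a b c > 0"
      using \<open>a \<noteq> b\<close> by (simp add: perimeter_def add_pos_nonneg)
    ultimately show False using \<open>alpha < 1\<close> by (simp add: mult_le_cancel_right1)
  qed
qed

lemma perimeter_orbit_step: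
  assumes contr: "contracts_perimeters_on UNIV T alpha lam" and "lam \<ge> 0" "lam < 2"
    and distinct: "x \<noteq> T x" "T x \<noteq> T (T x)" "x \<noteq> T (T x)"
  shows "perimeter (T x) (T (T x)) (T (T (T x)))
    \<le> (alpha + lam) / (1 - lam / 2) * perimeter x (T x) (T (T x))"
proof -
  define P where "P = perimeter x (T x) (T (T x))"
  define P' where "P' = perimeter (T x) (T (T x)) (T (T (T x)))"
  let ?D = "dist x (T x) + dist (T x) (T (T x)) + dist (T (T x)) (T (T (T x)))"
  have "?D \<le> P + P' / 2"
    unfolding P_def P'_def perimeter_def by metric
  have "P' \<le> alpha * P + lam * ?D"
    using contracts_perimeters_onD[OF contr _ _ _ distinct] unfolding P_def P'_def by simp
  also have "\<dots> \<le> alpha * P + lam * (P + P' / 2)"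
    using \<open>?D \<le> P + P' / 2\<close> \<open>lam \<ge> 0\<close> by (simp add: mult_left_mono)
  finally have "(1 - lam / 2) * P' \<le> (alpha + lam) * P"
    by (simp add: algebra_simps)
  with \<open>lam < 2\<close> show ?thesis
    unfolding P_def P'_def by (simp add: pos_le_divide_eq mult.commute)
qed

lemma le_power_mult_if_step_le:
  fixes P :: "nat \<Rightarrow> 'a::linordered_semiring_1"
  assumes step: "\<And>n. P (Suc n) \<le> q * P n" and "q \<ge> 0"
  shows "P n \<le> q ^ n * P 0"
proof (induction n)
  case (Suc n)
  have "P (Suc n) \<le> q * P n" by (rule step)
  also have "\<dots> \<le> q * (q ^ n * P 0)" using Suc.IH \<open>q \<ge> 0\<close> by (rule mult_left_mono)
  finally show ?case by (simp add: mult.assoc)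
qed simp

lemma orbit_dist_tendsto_zero:
  assumes contr: "contracts_perimeters_on UNIV T alpha lam"
    and "alpha \<ge> 0" "lam \<ge> 0" "alpha + 3 * lam / 2 < 1"
    and no_per2: "\<And>x. T x \<noteq> x \<Longrightarrow> T (T x) \<noteq> x"
  shows "(\<lambda>n. dist ((T ^^ n) x0) ((T ^^ Suc n) x0)) \<longlonglongrightarrow> 0"
proof (cases "\<exists>n. T ((T ^^ n) x0) = (T ^^ n) x0")
  case True
  then obtain n where fixed: "T ((T ^^ n) x0) = (T ^^ n) x0" by blast
  have "(T ^^ k) ((T ^^ n) x0) = (T ^^ n) x0" for k
    by (induction k) (simp_all add: fixed)
  then have stays: "(T ^^ m) x0 = (T ^^ n) x0" if "m \<ge> n" for m
    using that by (metis funpow_add le_add_diff_inverse2 o_apply)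
  have "\<forall>\<^sub>F m in sequentially. dist ((T ^^ m) x0) ((T ^^ Suc m) x0) = 0"
    using eventually_ge_at_top[of n] by eventually_elim (metis stays le_SucI dist_self)
  then show ?thesis by (rule tendsto_eventually)
next
  case False
  define P where "P n = perimeter ((T ^^ n) x0) ((T ^^ Suc n) x0) ((T ^^ Suc (Suc n)) x0)" for n
  define q where "q = (alpha + lam) / (1 - lam / 2)"
  have "q \<ge> 0" "q < 1"
    using assms(2-4) by (simp_all add: q_def field_simps)
  have P_step: "P (Suc n) \<le> q * P n" for n
  proof -
    let ?x = "(T ^^ n) x0"
    have "T ?x \<noteq> ?x" "T (T ?x) \<noteq> T ?x"
      using False by (metis funpow.simps(2) o_apply)+
    moreover from this(1) have "T (T ?x) \<noteq> ?x" by (rule no_per2)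
    moreover have "lam < 2" using assms(2,4) by simp
    ultimately show ?thesis
      using perimeter_orbit_step[OF contr \<open>lam \<ge> 0\<close>, of ?x] unfolding P_def q_def by simp
  qed
  have dist_le: "dist ((T ^^ n) x0) ((T ^^ Suc n) x0) \<le> q ^ n * P 0" for n
    using le_power_mult_if_step_le[where P = P and n = n, OF P_step \<open>q \<ge> 0\<close>]
    unfolding P_def[of n] perimeter_def
    by (smt (verit) zero_le_dist)
  have "(\<lambda>n. q ^ n * P 0) \<longlonglongrightarrow> 0"
    using \<open>q \<ge> 0\<close> \<open>q < 1\<close> by (intro tendsto_mult_left_zero LIMSEQ_power_zero) simp
  then show ?thesis
    by (rule Lim_null_comparison[OF always_eventually, rotated]) (use dist_le in simp)
qed

lemma fixed_point_if_dist_tendsto_zero: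
  fixes T :: "'a::metric_space \<Rightarrow> 'a"
  assumes "isCont T x" "y \<longlonglongrightarrow> x" "(\<lambda>k. dist (y k) (T (y k))) \<longlonglongrightarrow> 0"
  shows "T x = x"
proof -
  have "(\<lambda>k. dist (y k) (T (y k))) \<longlonglongrightarrow> dist x (T x)"
    using assms(2) by (intro tendsto_dist isCont_tendsto_compose[OF assms(1)])
  from this assms(3) have "dist x (T x) = 0" by (rule LIMSEQ_unique)
  then show ?thesis by simp
qed

theorem theorem5p2:
  fixes T :: "'a::metric_space \<Rightarrow> 'a"
    and M :: "'a set"
    and alpha lam :: real
    and x0 xs :: 'a
    and r :: "nat \<Rightarrow> nat"
  assumes card3: "\<exists>a b c :: 'a. a \<noteq> b \<and> b \<noteq> c \<and> a \<noteq> c"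
    and cont: "continuous_on UNIV T"
    and no_per2: "\<And>x. T x \<noteq> x \<Longrightarrow> T (T x) \<noteq> x"
    and dense: "closure M = UNIV"
    and alpha_nonneg: "alpha \<ge> 0" and lambda_nonneg: "lam \<ge> 0"
    and coef: "2 * alpha + 3 * lam / 2 < 1"
    and contr: "\<And>x y z. \<lbrakk>x \<in> M; y \<in> M; z \<in> M; x \<noteq> y; y \<noteq> z; x \<noteq> z\<rbrakk> \<Longrightarrow>
        dist (T x) (T y) + dist (T y) (T z) + dist (T x) (T z)
        \<le> alpha * (dist x y + dist y z + dist z x) + lam * (dist x (T x) + dist y (T y) + dist z (T z))"
    and subseq: "strict_mono r"
    and conv: "(\<lambda>k. (T ^^ (r k)) x0) \<longlonglongrightarrow> xs"
  shows "T xs = xs \<and> finite {x. T x = x} \<and> card {x. T x = x} \<le> 2"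
proof -
  have "contracts_perimeters_on M T alpha lam"
    using contr by (simp add: contracts_perimeters_on_def perimeter_def dist_commute)
  with cont dense have contr_UNIV: "contracts_perimeters_on UNIV T alpha lam"
    using contracts_perimeters_on_closure[of M T] by simp
  have "(\<lambda>n. dist ((T ^^ n) x0) ((T ^^ Suc n) x0)) \<longlonglongrightarrow> 0"
    using coef alpha_nonneg
    by (intro orbit_dist_tendsto_zero[OF contr_UNIV alpha_nonneg lambda_nonneg _ no_per2]) simp
  then have "(\<lambda>k. dist ((T ^^ r k) x0) (T ((T ^^ r k) x0))) \<longlonglongrightarrow> 0"
    using LIMSEQ_subseq_LIMSEQ[OF _ subseq] by (simp add: o_def)
  with conv cont have "T xs = xs"
    by (intro fixed_point_if_dist_tendsto_zero) (auto simp: continuous_on_eq_continuous_at)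
  moreover have "finite {x. T x = x} \<and> card {x. T x = x} \<le> 2"
    using contracts_perimeters_card_fixed_points[OF contr_UNIV] coef lambda_nonneg by simp
  ultimately show ?thesis by blast
qed

end
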